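(* Let $T\in\mathcal{B}(\mathcal{H})$ and let $T=A+iB$ be the Cartesian decomposition of $T$. Then for every $\theta\in\mathbb{R}$, \begin{equation*} \frac{1}{2}w(T)\leq w\left(\begin{bmatrix} 0 &A \\ e^{i\theta}B& 0 \end{bmatrix}\right)\leq w(T). \end{equation*}
   Context: $\mathcal{H}$ is a complex Hilbert space and $\mathcal{B}(\mathcal{H})$ is the $C^*$-algebra of all bounded linear operators on $\mathcal{H}$. For $T\in\mathcal{B}(\mathcal{H})$, $w(T)=\sup\{|\langle Tx,x\rangle|:\|x\|=1\}$ is the numerical radius. The Cartesian decomposition $T=A+iB$ has $A=\frac{T+T^*}{2}$ and $B=\frac{T-T^*}{2i}$ self-adjoint. A $2\times 2$ operator matrix with entries in $\mathcal{B}(\mathcal{H})$ is regarded as an operator on $\mathcal{H}\oplus\mathcal{H}$. *)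

theory Defs
  imports "HOL-Analysis.Analysis"
begin

class complex_inner = real_normed_vector +
  fixes scaleC :: "complex \<Rightarrow> 'a \<Rightarrow> 'a"
    and cinner :: "'a \<Rightarrow> 'a \<Rightarrow> complex"
  assumes scaleC_add_right: "scaleC a (x + y) = scaleC a x + scaleC a y"
    and scaleC_add_left: "scaleC (a + b) x = scaleC a x + scaleC b x"
    and scaleC_scaleC: "scaleC a (scaleC b x) = scaleC (a * b) x"
    and scaleC_one: "scaleC 1 x = x"
    and scaleC_of_real: "scaleC (complex_of_real r) x = scaleR r x"
    and cinner_conj: "cinner y x = cnj (cinner x y)"
    and cinner_add_left: "cinner (x + y) z = cinner x z + cinner y z"
    and cinner_scaleC_left: "cinner (scaleC c x) y = c * cinner x y"
    and cinner_self_nonneg: "0 \<le> Re (cinner x x)"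
    and cinner_self_eq_0: "cinner x x = 0 \<longleftrightarrow> x = 0"
    and norm_eq_sqrt_cinner: "norm x = sqrt (Re (cinner x x))"

class complex_hilbert = complex_inner + complete_space

definition bounded_clinear_op :: "('a::complex_inner \<Rightarrow> 'a) \<Rightarrow> bool" where
  "bounded_clinear_op f \<longleftrightarrow>
     (\<forall>x y. f (x + y) = f x + f y) \<and>
     (\<forall>c x. f (scaleC c x) = scaleC c (f x)) \<and>
     (\<exists>K. \<forall>x. norm (f x) \<le> K * norm x)"

definition selfadjoint_op :: "('a::complex_inner \<Rightarrow> 'a) \<Rightarrow> bool" where
  "selfadjoint_op A \<longleftrightarrow> (\<forall>x y. cinner (A x) y = cinner x (A y))"

text \<open>Numerical radius (the 0 is added only so that the trivial space gives 0;
  it does not change the supremum otherwise since all values are nonnegative).\<close>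
definition numrad :: "('a::complex_inner \<Rightarrow> 'a) \<Rightarrow> real" where
  "numrad T = Sup ({0} \<union> {cmod (cinner (T x) x) | x. norm x = 1})"

text \<open>The Hilbert direct sum H \<oplus> H, modelled on pairs.\<close>
definition cinner2 :: "'a::complex_inner \<times> 'a \<Rightarrow> 'a \<times> 'a \<Rightarrow> complex" where
  "cinner2 z w = cinner (fst z) (fst w) + cinner (snd z) (snd w)"

definition norm2 :: "'a::complex_inner \<times> 'a \<Rightarrow> real" where
  "norm2 z = sqrt ((norm (fst z))\<^sup>2 + (norm (snd z))\<^sup>2)"

text \<open>The 2x2 operator matrix [[P, Q], [R, S]] acting on H \<oplus> H.\<close>
definition block_op :: "('a::complex_inner \<Rightarrow> 'a) \<Rightarrow> ('a \<Rightarrow> 'a) \<Rightarrow> ('a \<Rightarrow> 'a) \<Rightarrow> ('a \<Rightarrow> 'a)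
    \<Rightarrow> 'a \<times> 'a \<Rightarrow> 'a \<times> 'a" where
  "block_op P Q R S z = (P (fst z) + Q (snd z), R (fst z) + S (snd z))"

definition numrad2 :: "('a::complex_inner \<times> 'a \<Rightarrow> 'a \<times> 'a) \<Rightarrow> real" where
  "numrad2 M = Sup ({0} \<union> {cmod (cinner2 (M z) z) | z. norm2 z = 1})"

end

theory Submission imports Defs begin

text \<open>Write \<open>M\<close> for the off-diagonal block operator with entries \<open>A\<close> and \<open>e B\<close>, \<open>|e| = 1\<close>,
  and \<open>a = \<langle>Ax,x\<rangle>\<close>, \<open>b = \<langle>Bx,x\<rangle>\<close>, which are real with \<open>\<langle>Tx,x\<rangle> = a + ib\<close>.
  Upper bound: \<open>\<langle>M(x,y),(x,y)\<rangle> = \<langle>Ay,x\<rangle> + e\<langle>Bx,y\<rangle>\<close>, and polarization shows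
  \<open>|\<langle>Su,v\<rangle>| \<le> w(S)(\<parallel>u\<parallel>\<^sup>2 + \<parallel>v\<parallel>\<^sup>2)/2\<close> for self-adjoint \<open>S\<close>; since \<open>w(A), w(B) \<le> w(T)\<close>
  this gives \<open>w(M) \<le> w(T)\<close>.
  Lower bound: with \<open>c\<^sup>2 = e\<close> and \<open>|d| = 1\<close>, the unit vector \<open>(x, cdx)/\<surd>2\<close> gives
  \<open>\<langle>M z, z\<rangle> = c(da + d\<^sup>*b)/2\<close>; the choices \<open>d = 1\<close> and \<open>d = i\<close> yield \<open>|a \<pm> b| \<le> 2w(M)\<close>,
  hence \<open>|\<langle>Tx,x\<rangle>| \<le> |a| + |b| = max |a \<pm> b| \<le> 2w(M)\<close>.\<close>

lemma cinner_add_right: "cinner x (y + z) = cinner x y + cinner (x::'a::complex_inner) z"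
  by (metis cinner_conj cinner_add_left complex_cnj_add)

lemma cinner_scaleC_right: "cinner x (scaleC c y) = cnj c * cinner (x::'a::complex_inner) y"
  by (metis cinner_conj cinner_scaleC_left complex_cnj_mult complex_cnj_cnj)

lemma cinner_zero_left [simp]: "cinner 0 (x::'a::complex_inner) = 0"
  by (metis add_cancel_right_left cinner_add_left add_0)

lemma cinner_zero_right [simp]: "cinner (x::'a::complex_inner) 0 = 0"
  by (metis cinner_conj cinner_zero_left complex_cnj_zero)

lemma scaleC_minus1_left: "scaleC (-1) (x::'a::complex_inner) = - x"
  by (metis scaleC_of_real of_real_1 of_real_minus scaleR_minus1_left)

lemma cinner_minus_left: "cinner (- x) (y::'a::complex_inner) = - cinner x y"
  by (metis scaleC_minus1_left cinner_scaleC_left mult_minus1)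

lemma cinner_minus_right: "cinner y (- x::'a::complex_inner) = - cinner y x"
  by (metis cinner_conj cinner_minus_left complex_cnj_minus)

lemma cinner_diff_left: "cinner (x - y) (z::'a::complex_inner) = cinner x z - cinner y z"
  by (simp add: cinner_add_left cinner_minus_left diff_conv_add_uminus del: add_uminus_conv_diff)

lemma cinner_diff_right: "cinner z (x - y::'a::complex_inner) = cinner z x - cinner z y"
  by (simp add: cinner_add_right cinner_minus_right diff_conv_add_uminus del: add_uminus_conv_diff)

lemma Re_cinner_self: "Re (cinner x (x::'a::complex_inner)) = (norm x)\<^sup>2"
  by (simp add: norm_eq_sqrt_cinner cinner_self_nonneg)

lemma cinner_self_eq_norm_sq: "cinner x (x::'a::complex_inner) = complex_of_real ((norm x)\<^sup>2)"
proof -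
  have "Im (cinner x x) = Im (cnj (cinner x x))"
    using cinner_conj[of x x] by simp
  then show ?thesis
    by (simp add: complex_eq_iff Re_cinner_self)
qed

lemma mult_cnj_eq_cmod_sq: "z * cnj z = (complex_of_real (cmod z))\<^sup>2"
  by (metis complex_norm_square of_real_power)

lemma norm_scaleC: "norm (scaleC c (x::'a::complex_inner)) = cmod c * norm x"
proof -
  have "complex_of_real ((norm (scaleC c x))\<^sup>2) = c * cnj c * complex_of_real ((norm x)\<^sup>2)"
    by (metis cinner_self_eq_norm_sq cinner_scaleC_left cinner_scaleC_right mult.assoc)
  also have "\<dots> = complex_of_real ((cmod c * norm x)\<^sup>2)"
    by (simp add: mult_cnj_eq_cmod_sq power_mult_distrib)
  finally have "(norm (scaleC c x))\<^sup>2 = (cmod c * norm x)\<^sup>2"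
    using of_real_eq_iff by blast
  then show ?thesis by (simp add: power2_eq_iff_nonneg)
qed

lemma norm_add_sq:
  "(norm (u + v))\<^sup>2 = (norm u)\<^sup>2 + (norm v)\<^sup>2 + 2 * Re (cinner u (v::'a::complex_inner))"
proof -
  have "cinner (u + v) (u + v) = cinner u u + cinner v v + (cinner u v + cnj (cinner u v))"
    by (simp add: cinner_add_left cinner_add_right cinner_conj[of v u])
  then have "Re (cinner (u + v) (u + v)) = Re (cinner u u) + Re (cinner v v) + 2 * Re (cinner u v)"
    by simp
  then show ?thesis by (simp add: Re_cinner_self)
qed

lemma norm_diff_sq:
  "(norm (u - v))\<^sup>2 = (norm u)\<^sup>2 + (norm v)\<^sup>2 - 2 * Re (cinner u (v::'a::complex_inner))"
  using norm_add_sq[of u "- v"] by (simp add: cinner_minus_right)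

lemma cauchy_schwarz_unit:
  assumes "norm (x::'a::complex_inner) = 1"
  shows "cmod (cinner u x) \<le> norm u"
proof -
  define c where "c = cinner u x"
  have "cinner (u - scaleC c x) (u - scaleC c x)
      = cinner u u - cnj c * c - c * cinner x u + c * cnj c * cinner x x"
    by (simp add: cinner_diff_left cinner_diff_right cinner_scaleC_left cinner_scaleC_right
        c_def algebra_simps)
  also have "\<dots> = complex_of_real ((norm u)\<^sup>2 - (cmod c)\<^sup>2)"
    using assms cinner_self_eq_norm_sq[of x] cinner_self_eq_norm_sq[of u] cinner_conj[of x u]
    by (simp add: c_def mult_cnj_eq_cmod_sq mult.commute)
  finally have "0 \<le> (norm u)\<^sup>2 - (cmod c)\<^sup>2"
    by (metis cinner_self_eq_norm_sq zero_le_power2 of_real_eq_iff)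
  then show ?thesis unfolding c_def
    by (metis abs_norm_cancel diff_ge_0_iff_ge norm_ge_zero power2_le_imp_le)
qed

lemma bounded_clinear_op_add: "bounded_clinear_op f \<Longrightarrow> f (x + y) = f x + f y"
  unfolding bounded_clinear_op_def by blast

lemma bounded_clinear_op_scaleC: "bounded_clinear_op f \<Longrightarrow> f (scaleC c x) = scaleC c (f x)"
  unfolding bounded_clinear_op_def by blast

lemma bounded_clinear_op_diff:
  assumes "bounded_clinear_op f"
  shows "f (x - y) = f x - f y"
proof -
  have "f (- y) = - f y"
    using bounded_clinear_op_scaleC[OF assms, of "-1" y] by (simp add: scaleC_minus1_left)
  then show ?thesis
    using bounded_clinear_op_add[OF assms, of x "- y"] by simp
qed

lemma selfadjoint_op_cinner_real:
  assumes "selfadjoint_op S"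
  shows "cinner (S w) w = complex_of_real (Re (cinner (S w) w))"
proof -
  have "cinner (S w) w = cnj (cinner (S w) w)"
    using assms unfolding selfadjoint_op_def by (metis cinner_conj)
  then have "Im (cinner (S w) w) = 0"
    by (metis cnj.sel(2) neg_equal_zero)
  then show ?thesis
    by (simp add: complex_eq_iff)
qed

lemma selfadjoint_op_Re_cinner_le:
  assumes "selfadjoint_op S" and S: "bounded_clinear_op S"
    and N: "\<And>w. cmod (cinner (S w) w) \<le> N * (norm w)\<^sup>2"
  shows "Re (cinner (S u) v) \<le> N / 2 * ((norm u)\<^sup>2 + (norm v)\<^sup>2)"
proof -
  have "cinner (S (u + v)) (u + v) - cinner (S (u - v)) (u - v) = 2 * (cinner (S u) v + cinner (S v) u)"
    by (simp add: bounded_clinear_op_add[OF S] bounded_clinear_op_diff[OF S] cinner_add_left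
        cinner_add_right cinner_diff_left cinner_diff_right algebra_simps)
  moreover have "cinner (S v) u = cnj (cinner (S u) v)"
    using assms(1) unfolding selfadjoint_op_def by (metis cinner_conj)
  ultimately have "Re (cinner (S (u + v)) (u + v)) - Re (cinner (S (u - v)) (u - v))
      = Re (2 * (cinner (S u) v + cnj (cinner (S u) v)))"
    by (metis minus_complex.sel(1))
  then have "4 * Re (cinner (S u) v)
      = Re (cinner (S (u + v)) (u + v)) - Re (cinner (S (u - v)) (u - v))"
    by simp
  also have "\<dots> \<le> cmod (cinner (S (u + v)) (u + v)) + cmod (cinner (S (u - v)) (u - v))"
    using abs_Re_le_cmod[of "cinner (S (u + v)) (u + v)"]
      abs_Re_le_cmod[of "cinner (S (u - v)) (u - v)"] by linarith
  also have "\<dots> \<le> N * (norm (u + v))\<^sup>2 + N * (norm (u - v))\<^sup>2"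
    using N[of "u + v"] N[of "u - v"] by linarith
  also have "\<dots> = 2 * N * ((norm u)\<^sup>2 + (norm v)\<^sup>2)"
    by (simp add: norm_add_sq norm_diff_sq algebra_simps)
  finally show ?thesis by simp
qed

lemma selfadjoint_op_cmod_cinner_le:
  assumes "selfadjoint_op S" and S: "bounded_clinear_op S"
    and N: "\<And>w. cmod (cinner (S w) w) \<le> N * (norm w)\<^sup>2"
  shows "cmod (cinner (S u) v) \<le> N / 2 * ((norm u)\<^sup>2 + (norm v)\<^sup>2)"
proof (cases "cinner (S u) v = 0")
  case True
  have "0 \<le> N * (norm u)\<^sup>2" "0 \<le> N * (norm v)\<^sup>2"
    using N[of u] N[of v] norm_ge_zero[of "cinner (S u) u"] norm_ge_zero[of "cinner (S v) v"]
    by linarith+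
  then show ?thesis using True by (simp add: distrib_left)
next
  case False
  define z where "z = cinner (S u) v"
  define c where "c = cnj z / complex_of_real (cmod z)"
  \<comment> \<open>rotating \<open>u\<close> by the phase \<open>c\<close> makes the inner product real and equal to its modulus\<close>
  have "cinner (S (scaleC c u)) v = c * z"
    by (simp add: bounded_clinear_op_scaleC[OF S] cinner_scaleC_left z_def)
  also have "\<dots> = complex_of_real (cmod z)"
    using False unfolding c_def z_def
    by (simp add: mult.commute mult_cnj_eq_cmod_sq power2_eq_square)
  finally have "cinner (S (scaleC c u)) v = complex_of_real (cmod z)" .
  then have "cmod z = Re (cinner (S (scaleC c u)) v)" by simp
  also have "\<dots> \<le> N / 2 * ((norm (scaleC c u))\<^sup>2 + (norm v)\<^sup>2)"
    by (rule selfadjoint_op_Re_cinner_le[OF assms])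
  also have "norm (scaleC c u) = norm u"
    using False by (simp add: norm_scaleC c_def z_def norm_divide)
  finally show ?thesis by (simp add: z_def)
qed

lemma Sup_zero_union_le: "(\<And>r. r \<in> X \<Longrightarrow> r \<le> N) \<Longrightarrow> 0 \<le> N \<Longrightarrow> Sup ({0} \<union> X) \<le> (N::real)"
  by (intro cSup_least) auto

lemma le_Sup_zero_union: "bdd_above X \<Longrightarrow> r \<in> X \<Longrightarrow> r \<le> Sup ({0} \<union> (X::real set))"
  by (intro cSup_upper) auto

lemma Sup_zero_union_nonneg: "bdd_above X \<Longrightarrow> 0 \<le> Sup ({0} \<union> (X::real set))"
  by (intro cSup_upper) auto

lemma bdd_above_numrad_set:
  assumes "bounded_clinear_op T"
  shows "bdd_above {cmod (cinner (T x) x) | x. norm x = 1}"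
proof -
  obtain K where K: "\<And>x. norm (T x) \<le> K * norm x"
    using assms unfolding bounded_clinear_op_def by blast
  have "cmod (cinner (T x) x) \<le> K" if "norm x = 1" for x
    using cauchy_schwarz_unit[OF that, of "T x"] K[of x] that by simp
  then show ?thesis by (intro bdd_aboveI[of _ K]) auto
qed

lemma numrad_nonneg: "bounded_clinear_op T \<Longrightarrow> 0 \<le> numrad T"
  unfolding numrad_def by (rule Sup_zero_union_nonneg[OF bdd_above_numrad_set])

lemma cmod_cinner_le_numrad:
  assumes T: "bounded_clinear_op T"
  shows "cmod (cinner (T w) w) \<le> numrad T * (norm w)\<^sup>2"
proof (cases "w = 0")
  case True
  then show ?thesis by simp
next
  case False
  define u where "u = scaleC (complex_of_real (1 / norm w)) w"
  have "norm u = 1"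
    using False by (simp add: u_def norm_scaleC norm_divide)
  then have "cmod (cinner (T u) u) \<le> numrad T"
    unfolding numrad_def by (blast intro: le_Sup_zero_union[OF bdd_above_numrad_set[OF T]])
  moreover have "cinner (T u) u = complex_of_real ((1 / norm w)\<^sup>2) * cinner (T w) w"
    by (simp add: u_def bounded_clinear_op_scaleC[OF T] cinner_scaleC_left cinner_scaleC_right
        power2_eq_square)
  then have "cmod (cinner (T u) u) = cmod (cinner (T w) w) / (norm w)\<^sup>2"
    by (simp add: norm_mult norm_divide power2_eq_square)
  ultimately show ?thesis
    using False by (simp add: pos_divide_le_eq)
qed

context
  fixes T A B :: "'a::complex_inner \<Rightarrow> 'a"
  assumes A: "selfadjoint_op A" and B: "selfadjoint_op B"
    and T_eq: "\<forall>x. T x = A x + scaleC \<i> (B x)"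
begin

lemma cinner_cartesian:
  "cinner (T w) w = complex_of_real (Re (cinner (A w) w)) + \<i> * complex_of_real (Re (cinner (B w) w))"
  using T_eq by (simp add: cinner_add_left cinner_scaleC_left
      flip: selfadjoint_op_cinner_real[OF A] selfadjoint_op_cinner_real[OF B])

lemma cmod_cinner_cartesian_le:
  "cmod (cinner (T w) w) \<le> \<bar>Re (cinner (A w) w)\<bar> + \<bar>Re (cinner (B w) w)\<bar>"
  unfolding cinner_cartesian by (metis norm_triangle_ineq norm_of_real norm_mult norm_ii mult_1)

lemma cmod_cinner_cartesian_part_le_numrad:
  assumes T: "bounded_clinear_op T"
  shows "cmod (cinner (A w) w) \<le> numrad T * (norm w)\<^sup>2"
    and "cmod (cinner (B w) w) \<le> numrad T * (norm w)\<^sup>2"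
proof -
  have "Re (cinner (T w) w) = Re (cinner (A w) w)" "Im (cinner (T w) w) = Re (cinner (B w) w)"
    by (simp_all add: cinner_cartesian)
  then have "cmod (cinner (A w) w) \<le> cmod (cinner (T w) w)"
    and "cmod (cinner (B w) w) \<le> cmod (cinner (T w) w)"
    using abs_Re_le_cmod[of "cinner (T w) w"] abs_Im_le_cmod[of "cinner (T w) w"]
      selfadjoint_op_cinner_real[OF A, of w] selfadjoint_op_cinner_real[OF B, of w]
    by (metis norm_of_real)+
  with cmod_cinner_le_numrad[OF T, of w] show "cmod (cinner (A w) w) \<le> numrad T * (norm w)\<^sup>2"
    and "cmod (cinner (B w) w) \<le> numrad T * (norm w)\<^sup>2"
    by linarith+
qed

end

lemma cinner2_offdiag:
  "cinner2 (block_op (\<lambda>_. 0) P Q (\<lambda>_. 0) z) z = cinner (P (snd z)) (fst z) + cinner (Q (fst z)) (snd z)"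
  by (simp add: block_op_def cinner2_def)

lemma cmod_cinner2_offdiag_le:
  assumes "selfadjoint_op A" "bounded_clinear_op A" "selfadjoint_op B" "bounded_clinear_op B"
    and "\<And>w. cmod (cinner (A w) w) \<le> N * (norm w)\<^sup>2"
    and "\<And>w. cmod (cinner (B w) w) \<le> N * (norm w)\<^sup>2"
    and "cmod e = 1" and "norm2 z = 1"
  shows "cmod (cinner2 (block_op (\<lambda>_. 0) A (\<lambda>x. scaleC e (B x)) (\<lambda>_. 0) z) z) \<le> N"
proof -
  have unit: "(norm (fst z))\<^sup>2 + (norm (snd z))\<^sup>2 = 1"
    using \<open>norm2 z = 1\<close> unfolding norm2_def by (metis real_sqrt_eq_1_iff)
  have "cmod (cinner2 (block_op (\<lambda>_. 0) A (\<lambda>x. scaleC e (B x)) (\<lambda>_. 0) z) z)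
      \<le> cmod (cinner (A (snd z)) (fst z)) + cmod (cinner (B (fst z)) (snd z))"
    unfolding cinner2_offdiag cinner_scaleC_left
    by (metis norm_triangle_ineq norm_mult \<open>cmod e = 1\<close> mult_1)
  also have "\<dots> \<le> N / 2 * ((norm (snd z))\<^sup>2 + (norm (fst z))\<^sup>2)
                + N / 2 * ((norm (fst z))\<^sup>2 + (norm (snd z))\<^sup>2)"
    using selfadjoint_op_cmod_cinner_le[OF assms(1,2,5), of "snd z" "fst z"]
      selfadjoint_op_cmod_cinner_le[OF assms(3,4,6), of "fst z" "snd z"] by linarith
  also have "\<dots> = N"
    using unit by (simp add: add.commute)
  finally show ?thesis .
qed

lemma cinner2_offdiag_diagonal_vector:
  assumes "bounded_clinear_op A" "bounded_clinear_op B" "cmod c = 1"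
  shows "cinner2 (block_op (\<lambda>_. 0) A (\<lambda>x. scaleC (c * c) (B x)) (\<lambda>_. 0)
             (scaleC (complex_of_real s) x, scaleC (complex_of_real s * c * d) x))
             (scaleC (complex_of_real s) x, scaleC (complex_of_real s * c * d) x)
         = complex_of_real (s\<^sup>2) * c * (d * cinner (A x) x + cnj d * cinner (B x) x)"
proof -
  have "c * cnj c = 1"
    using assms(3) by (simp add: mult_cnj_eq_cmod_sq)
  then show ?thesis
    by (simp add: cinner2_offdiag bounded_clinear_op_scaleC[OF assms(1)]
        bounded_clinear_op_scaleC[OF assms(2)] cinner_scaleC_left cinner_scaleC_right
        power2_eq_square algebra_simps)
qed

lemma abs_add_abs_le_two_numrad2_offdiag:
  fixes A B :: "'a::complex_inner \<Rightarrow> 'a" and e :: complex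
  defines "M \<equiv> block_op (\<lambda>_. 0) A (\<lambda>x. scaleC e (B x)) (\<lambda>_. 0)"
  assumes A: "bounded_clinear_op A" and B: "bounded_clinear_op B"
    and "selfadjoint_op A" "selfadjoint_op B" and "cmod e = 1"
    and bdd: "bdd_above {cmod (cinner2 (M z) z) | z. norm2 z = 1}"
    and x: "norm x = 1"
  shows "\<bar>Re (cinner (A x) x)\<bar> + \<bar>Re (cinner (B x) x)\<bar> \<le> 2 * numrad2 M"
proof -
  define a where "a = Re (cinner (A x) x)"
  define b where "b = Re (cinner (B x) x)"
  have ab: "cinner (A x) x = complex_of_real a" "cinner (B x) x = complex_of_real b"
    unfolding a_def b_def by (intro selfadjoint_op_cinner_real assms(4,5))+
  define c where "c = csqrt e"
  have c: "cmod c = 1" "e = c * c"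
    using \<open>cmod e = 1\<close> by (simp_all add: c_def flip: power2_eq_square)
  have rotated_bound: "cmod (complex_of_real a * d + complex_of_real b * cnj d) \<le> 2 * numrad2 M"
    if "cmod d = 1" for d
  proof -
    define s where "s = 1 / sqrt 2"
    define z where "z = (scaleC (complex_of_real s) x, scaleC (complex_of_real s * c * d) x)"
    have "norm2 z = 1"
      using c \<open>cmod d = 1\<close> x
      by (simp add: norm2_def z_def s_def norm_scaleC norm_mult norm_divide power_divide)
    then have "cmod (cinner2 (M z) z) \<le> numrad2 M"
      unfolding numrad2_def by (blast intro: le_Sup_zero_union[OF bdd])
    moreover have "cinner2 (M z) z = complex_of_real (1 / 2) * c * (d * a + cnj d * b)"
      using cinner2_offdiag_diagonal_vector[OF A B c(1), of s x d]
      by (simp add: M_def z_def c(2) s_def ab power_divide)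
    ultimately show ?thesis
      using c(1) by (simp add: norm_mult mult.commute)
  qed
  have "\<bar>a + b\<bar> \<le> 2 * numrad2 M"
    using rotated_bound[of 1] by (simp flip: of_real_add)
  moreover have "\<bar>a - b\<bar> \<le> 2 * numrad2 M"
  proof -
    have "complex_of_real a * \<i> + complex_of_real b * cnj \<i> = \<i> * complex_of_real (a - b)"
      by (simp add: algebra_simps)
    then show ?thesis
      using rotated_bound[of \<i>] by (simp add: norm_mult flip: of_real_diff)
  qed
  ultimately show ?thesis
    unfolding a_def b_def by linarith
qed

theorem corollary4p9:
  fixes T A B :: "'a::complex_hilbert \<Rightarrow> 'a" and \<theta> :: real
  assumes "bounded_clinear_op T" and "bounded_clinear_op A" and "bounded_clinear_op B"
    and "selfadjoint_op A" and "selfadjoint_op B"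
    and "\<forall>x. T x = A x + scaleC \<i> (B x)"
  shows "(1/2) * numrad T
           \<le> numrad2 (block_op (\<lambda>_. 0) A (\<lambda>x. scaleC (exp (\<i> * complex_of_real \<theta>)) (B x)) (\<lambda>_. 0))
       \<and> numrad2 (block_op (\<lambda>_. 0) A (\<lambda>x. scaleC (exp (\<i> * complex_of_real \<theta>)) (B x)) (\<lambda>_. 0))
           \<le> numrad T"
proof -
  define M where "M = block_op (\<lambda>_. 0) A (\<lambda>x. scaleC (exp (\<i> * complex_of_real \<theta>)) (B x)) (\<lambda>_. 0)"
  have M_le: "cmod (cinner2 (M z) z) \<le> numrad T" if "norm2 z = 1" for z
    unfolding M_def
    using cmod_cinner2_offdiag_le[OF assms(4,2,5,3)
        cmod_cinner_cartesian_part_le_numrad[OF assms(4-6,1)] _ that] by simp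
  have "numrad2 M \<le> numrad T"
    unfolding numrad2_def using M_le numrad_nonneg[OF assms(1)]
    by (intro Sup_zero_union_le) auto
  moreover have bdd: "bdd_above {cmod (cinner2 (M z) z) | z. norm2 z = 1}"
    using M_le by (intro bdd_aboveI[of _ "numrad T"]) auto
  have "cmod (cinner (T x) x) \<le> 2 * numrad2 M" if "norm x = 1" for x
    using cmod_cinner_cartesian_le[OF assms(4-6), of x]
      abs_add_abs_le_two_numrad2_offdiag[OF assms(2-5) _ bdd[unfolded M_def] that] by (simp add: M_def)
  moreover have "0 \<le> numrad2 M"
    unfolding numrad2_def by (rule Sup_zero_union_nonneg[OF bdd])
  ultimately have "numrad T \<le> 2 * numrad2 M"
    unfolding numrad_def by (intro Sup_zero_union_le) auto
  with \<open>numrad2 M \<le> numrad T\<close> show ?thesis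
    unfolding M_def by simp
qed

end
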